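(* There exist a compact set $\mathcal{X}\subseteq\mathbb{R}^n$, a set $\mathcal{X}_0\subseteq\mathcal{X}$, a map $f:\mathcal{X}\to\mathcal{X}$ and a set $\mathcal{X}_{INF}\subseteq\mathcal{X}$ such that for every $x_0\in\mathcal{X}_0$ the state sequence $x_{k+1}=f(x_k)$ satisfies $x_k\in\mathcal{X}_{INF}$ for infinitely many $k$, but there is no bounded function $\mathcal{T}:\mathcal{X}\times\mathcal{X}\to\mathbb{R}$ together with a constant $\xi>0$ satisfying: (i) $\mathcal{T}(x,f(x))\geq0$ for all $x\in\mathcal{X}$; (ii) for all $x,y\in\mathcal{X}$: if $\mathcal{T}(x,f(x))\geq 0$ and $\mathcal{T}(f(x),y)\geq0$, then $\mathcal{T}(x,y)\geq0$; (iii) for all $x_0\in\mathcal{X}_0$ and all $y\in\mathcal{X}\setminus\mathcal{X}_{INF}$: if $\mathcal{T}(x_0,y)\geq0$ and $\mathcal{T}(y,f(y))\geq 0$, then $\mathcal{T}(x_0,f(y))\geq\mathcal{T}(x_0,y)+\xi$.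
   Context: A discrete-time dynamical system $(\mathcal{X},\mathcal{X}_0,f)$ (a control system with a single input) has state sequences $\langle x_0,x_1,\ldots\rangle$ with $x_0\in\mathcal{X}_0$ and $x_{k+1}=f(x_k)$. Conditions (i)–(iii) with bounded $\mathcal{T}$ constitute a (control) closure certificate for recurrence of $\mathcal{X}_{INF}$ in the single-input case. *)

theory Defs
  imports "HOL-Analysis.Analysis"
begin

end

theory Submission
  imports Defs
begin

(* A bounded closure certificate forces a uniform bound on the time orbits from X0 need to
   reach XINF: along an orbit that stays outside XINF, condition (iii) makes T x0 (f^k x0)
   grow by xi per step, and boundedness caps it.
   The counterexample is the orbit 2^-m v, 2^-(m-1) v, ..., v of the doubling map with
   fixed point v: every orbit from X0 = {2^-m v} reaches XINF = {v} and stays there, but the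
   hitting time m is unbounded; X is compact because 2^-m v tends to 0. *)

definition bounded_closure_certificate ::
    "'a set \<Rightarrow> 'a set \<Rightarrow> ('a \<Rightarrow> 'a) \<Rightarrow> 'a set \<Rightarrow> ('a \<Rightarrow> 'a \<Rightarrow> real) \<Rightarrow> real \<Rightarrow> bool" where
  "bounded_closure_certificate X X0 f XINF T \<xi> \<longleftrightarrow>
     (\<exists>B. \<forall>x\<in>X. \<forall>y\<in>X. \<bar>T x y\<bar> \<le> B) \<and> \<xi> > 0 \<and>
     (\<forall>x\<in>X. T x (f x) \<ge> 0) \<and>
     (\<forall>x\<in>X. \<forall>y\<in>X. T x (f x) \<ge> 0 \<and> T (f x) y \<ge> 0 \<longrightarrow> T x y \<ge> 0) \<and>
     (\<forall>x0\<in>X0. \<forall>y\<in>X - XINF. T x0 y \<ge> 0 \<and> T y (f y) \<ge> 0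
        \<longrightarrow> T x0 (f y) \<ge> T x0 y + \<xi>)"

lemma funpow_in_invariant_set:
  assumes "f ` X \<subseteq> X" "x \<in> X"
  shows "(f ^^ k) x \<in> X"
  using assms by (induction k) auto

lemma closure_certificate_grows_along_orbit:
  assumes "f ` X \<subseteq> X" "x0 \<in> X" "\<xi> \<ge> 0"
    and nonneg: "\<forall>x\<in>X. T x (f x) \<ge> 0"
    and incr: "\<forall>y\<in>X - XINF. T x0 y \<ge> 0 \<and> T y (f y) \<ge> 0 \<longrightarrow> T x0 (f y) \<ge> T x0 y + \<xi>"
    and avoid: "\<forall>i\<in>{1..j}. (f ^^ i) x0 \<notin> XINF"
  shows "T x0 ((f ^^ Suc j) x0) \<ge> real j * \<xi>"
  using avoid
proof (induction j)
  case 0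
  then show ?case using nonneg \<open>x0 \<in> X\<close> by simp
next
  case (Suc j)
  let ?y = "(f ^^ Suc j) x0"
  have IH: "T x0 ?y \<ge> real j * \<xi>" using Suc by simp
  have y: "?y \<in> X - XINF"
    using Suc.prems funpow_in_invariant_set[OF assms(1,2)] by (auto simp del: funpow.simps)
  have "T x0 ?y \<ge> 0"
    using IH \<open>\<xi> \<ge> 0\<close> by (meson order_trans mult_nonneg_nonneg of_nat_0_le_iff)
  then have "T x0 (f ?y) \<ge> T x0 ?y + \<xi>"
    using incr nonneg y by blast
  then show ?case using IH by (simp add: algebra_simps)
qed

lemma bounded_closure_certificate_bounds_hitting_time:
  assumes cert: "bounded_closure_certificate X X0 f XINF T \<xi>"
    and "X0 \<subseteq> X" "f ` X \<subseteq> X"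
  obtains N where "\<forall>x0\<in>X0. \<exists>i\<in>{1..N}. (f ^^ i) x0 \<in> XINF"
proof -
  obtain B where B: "\<forall>x\<in>X. \<forall>y\<in>X. \<bar>T x y\<bar> \<le> B" and "\<xi> > 0"
    using cert unfolding bounded_closure_certificate_def by blast
  obtain N where N: "B < real N * \<xi>" using ex_less_of_nat_mult[OF \<open>\<xi> > 0\<close>] by blast
  have "\<exists>i\<in>{1..N}. (f ^^ i) x0 \<in> XINF" if "x0 \<in> X0" for x0
  proof (rule ccontr)
    assume "\<not> ?thesis"
    then have "T x0 ((f ^^ Suc N) x0) \<ge> real N * \<xi>"
      using cert that assms(2,3) \<open>\<xi> > 0\<close> unfolding bounded_closure_certificate_def
      by (intro closure_certificate_grows_along_orbit[where X = X]) auto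
    moreover have "T x0 ((f ^^ Suc N) x0) \<le> B"
      using B that assms(2) funpow_in_invariant_set[OF assms(3)] by (meson abs_le_D1 subsetD)
    ultimately show False using N by linarith
  qed
  then show thesis using that by blast
qed

definition halving :: "'a::real_vector \<Rightarrow> nat \<Rightarrow> 'a" where
  "halving v j = (1/2 :: real) ^ j *\<^sub>R v"

definition doubling_map :: "'a::real_vector \<Rightarrow> 'a \<Rightarrow> 'a" where
  "doubling_map v x = (if x = v then v else 2 *\<^sub>R x)"

lemma halving_eq_iff:
  assumes "v \<noteq> 0"
  shows "halving v j = v \<longleftrightarrow> j = 0"
proof -
  have "halving v j = v \<longleftrightarrow> (1/2 :: real) ^ j = 1"
    using assms scaleR_cancel_right[of "(1/2 :: real) ^ j" v 1] by (simp add: halving_def)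
  also have "\<dots> \<longleftrightarrow> j = 0" using power_less_one_iff[of "1/2 :: real" j] by auto
  finally show ?thesis .
qed

lemma doubling_map_halving:
  assumes "v \<noteq> 0"
  shows "doubling_map v (halving v j) = halving v (j - 1)"
proof (cases j)
  case (Suc i)
  then show ?thesis
    using halving_eq_iff[OF assms, of j] by (simp add: doubling_map_def halving_def)
qed (simp add: doubling_map_def halving_def)

lemma funpow_doubling_map_halving:
  assumes "v \<noteq> 0"
  shows "(doubling_map v ^^ k) (halving v m) = halving v (m - k)"
  by (induction k) (simp_all add: doubling_map_halving[OF assms] diff_Suc)

lemma halving_orbit_avoids_fixed_point:
  assumes "v \<noteq> 0" "i \<le> m"
  shows "(doubling_map v ^^ i) (halving v (Suc m)) \<noteq> v"
  using assms by (simp add: funpow_doubling_map_halving halving_eq_iff)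

lemma halving_orbit_recurrent:
  assumes "v \<noteq> 0"
  shows "infinite {k. (doubling_map v ^^ k) (halving v m) = v}"
proof -
  have "{m..} \<subseteq> {k. (doubling_map v ^^ k) (halving v m) = v}"
    by (auto simp: funpow_doubling_map_halving[OF assms] halving_eq_iff[OF assms])
  then show ?thesis using infinite_Ici finite_subset by blast
qed

lemma doubling_map_zero: "doubling_map v 0 = 0"
  by (simp add: doubling_map_def)

lemma compact_halving_orbit:
  fixes v :: "'a::{real_normed_vector, heine_borel}"
  shows "compact (insert 0 (range (halving v)))"
proof (rule compact_sequence_with_limit)
  have "(\<lambda>j. (1/2 :: real) ^ j *\<^sub>R v) \<longlonglongrightarrow> 0 *\<^sub>R v"
    by (intro tendsto_scaleR LIMSEQ_power_zero tendsto_const) simp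
  then show "halving v \<longlonglongrightarrow> 0" by (simp add: halving_def[abs_def])
qed

lemma doubling_map_maps_halving_orbit:
  assumes "v \<noteq> 0"
  shows "doubling_map v ` insert 0 (range (halving v)) \<subseteq> insert 0 (range (halving v))"
  using doubling_map_halving[OF assms] by (auto simp: doubling_map_zero)

theorem lemma2:
  shows "\<exists>(X :: (real ^ 'n) set) X0 (f :: real ^ 'n \<Rightarrow> real ^ 'n) XINF.
    compact X \<and> X0 \<subseteq> X \<and> f ` X \<subseteq> X \<and> XINF \<subseteq> X \<and>
    (\<forall>x0\<in>X0. infinite {k :: nat. (f ^^ k) x0 \<in> XINF}) \<and>
    \<not> (\<exists>(T :: real ^ 'n \<Rightarrow> real ^ 'n \<Rightarrow> real) (\<xi> :: real).
          (\<exists>B. \<forall>x\<in>X. \<forall>y\<in>X. \<bar>T x y\<bar> \<le> B) \<and> \<xi> > 0 \<and>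
          (\<forall>x\<in>X. T x (f x) \<ge> 0) \<and>
          (\<forall>x\<in>X. \<forall>y\<in>X. T x (f x) \<ge> 0 \<and> T (f x) y \<ge> 0 \<longrightarrow> T x y \<ge> 0) \<and>
          (\<forall>x0\<in>X0. \<forall>y\<in>X - XINF. T x0 y \<ge> 0 \<and> T y (f y) \<ge> 0
                \<longrightarrow> T x0 (f y) \<ge> T x0 y + \<xi>))"
proof -
  let ?v = "One :: real ^ 'n"
  let ?X = "insert 0 (range (halving ?v))"
  let ?Init = "range (halving ?v)"
  let ?f = "doubling_map ?v"
  let ?Inf = "{?v}"
  have v: "?v \<noteq> 0" using One_non_0 by blast
  have no_certificate: "\<not> (\<exists>T \<xi>. bounded_closure_certificate ?X ?Init ?f ?Inf T \<xi>)"
  proof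
    assume "\<exists>T \<xi>. bounded_closure_certificate ?X ?Init ?f ?Inf T \<xi>"
    then obtain N where "\<forall>x0\<in>?Init. \<exists>i\<in>{1..N}. (?f ^^ i) x0 \<in> ?Inf"
      using bounded_closure_certificate_bounds_hitting_time doubling_map_maps_halving_orbit[OF v]
      by (metis subset_insertI)
    then show False using halving_orbit_avoids_fixed_point[OF v] by fastforce
  qed
  have "?v \<in> ?Init" using halving_eq_iff[OF v] by (metis rangeI)
  then have "compact ?X \<and> ?Init \<subseteq> ?X \<and> ?f ` ?X \<subseteq> ?X \<and> ?Inf \<subseteq> ?X \<and>
      (\<forall>x0\<in>?Init. infinite {k. (?f ^^ k) x0 \<in> ?Inf}) \<and>
      \<not> (\<exists>T \<xi>. bounded_closure_certificate ?X ?Init ?f ?Inf T \<xi>)"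
    using compact_halving_orbit doubling_map_maps_halving_orbit[OF v]
      halving_orbit_recurrent[OF v] no_certificate
    by (intro conjI ballI) auto
  then show ?thesis unfolding bounded_closure_certificate_def by (intro exI)
qed

end
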